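(* Let $\mathbf{x}$ be a parking function of length $n$. Then the mixed graph $P(\mathbf{x})$ produced by Algorithm A is a parking graph on $[n]$, and for each vertex $i$ the number of directed edges (up or down) of $P(\mathbf{x})$ pointing into $i$ equals $x_i-1$.
   Context: A parking function of length $n$ is a sequence of positive integers which, sorted increasingly as $x_{(1)}\le\dots\le x_{(n)}$, satisfies $x_{(k)}\le k$ for all $k$. A parking graph $P$ on $[n]$ is a mixed graph with vertex set $[n]$ in which every pair $\{j,k\}$ with $1\le j<k\le n$ is joined by exactly one edge: a down edge $j\leftarrow k$ (directed from $k$ to $j$), an up edge $j\rightarrow k$ (directed from $j$ to $k$), or a downish (undirected) edge $jk$; letting $\vec P$ be obtained by replacing each downish $jk$ ($j<k$) with $j\leftarrow k$, $P$ must satisfy: (i) $\vec P$ is acyclic, and (ii) for every triangle of $P$ having at least one down edge and at least one downish edge, the source (in-degree $0$ within the triangle in $\vec P$) and sink (out-degree $0$ within the triangle in $\vec P$) are not joined by a downish edge. Algorithm A: Input $\mathbf{x}$; start with vertex set $[n]$ and no edges; set $\mathbf{y}:=\mathbf{x}-(1,\dots,1)$. Repeat: (Up step) If some $y_k=0$: let $j:=\max\{k: y_k=0\}$; for every $k>j$ with $y_k>0$, introduce the up edge $j\rightarrow k$ and replace $y_k$ by $y_k-1$; replace every entry that was negative at the start of this step by that entry minus $1$; set $y_j:=-1$; repeat. (Down step) Else, if some $y_k>0$: among all indices $j$ such that there is $k<j$ with $y_k>0$ and the edge $k\leftarrow j$ not yet introduced, choose $j$ with minimal $y_j$; for every $k<j$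 with $y_k>0$, introduce the down edge $k\leftarrow j$ and replace $y_k$ by $y_k-1$; repeat. (Stop) Else (all $y_k<0$): join every pair not yet joined by a downish edge and stop. Output: the mixed graph $P(\mathbf{x})$. *)

theory Defs
  imports Main
begin

text \<open>A sequence x_1..x_n is the list x with x_i = x ! (i - 1).\<close>
definition parking_function :: "nat list \<Rightarrow> bool" where
  "parking_function x \<longleftrightarrow>
     (\<forall>v\<in>set x. v \<ge> 1) \<and> (\<forall>k<length x. sort x ! k \<le> k + 1)"

text \<open>All edges are stored as pairs (j,k) with j < k:
  (j,k) in up: up edge j -> k;  (j,k) in down: down edge j <- k (directed from k to j);
  (j,k) in downish: undirected downish edge jk.\<close>
record mgraph =
  up :: "(nat \<times> nat) set"
  down :: "(nat \<times> nat) set"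
  downish :: "(nat \<times> nat) set"

definition vpairs :: "nat \<Rightarrow> (nat \<times> nat) set" where
  "vpairs n = {(j, k). 1 \<le> j \<and> j < k \<and> k \<le> n}"

definition mixed_graph :: "nat \<Rightarrow> mgraph \<Rightarrow> bool" where
  "mixed_graph n P \<longleftrightarrow>
     up P \<subseteq> vpairs n \<and> down P \<subseteq> vpairs n \<and> downish P \<subseteq> vpairs n \<and>
     up P \<inter> down P = {} \<and> up P \<inter> downish P = {} \<and> down P \<inter> downish P = {} \<and>
     up P \<union> down P \<union> downish P = vpairs n"

text \<open>Arcs (from, to) of the directed graph vec P (downish jk replaced by j <- k).\<close>
definition arcs :: "mgraph \<Rightarrow> (nat \<times> nat) set" where
  "arcs P = up P \<union> {(k, j). (j, k) \<in> down P} \<union> {(k, j). (j, k) \<in> downish P}"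

definition is_down :: "mgraph \<Rightarrow> nat \<Rightarrow> nat \<Rightarrow> bool" where
  "is_down P a b \<longleftrightarrow> (min a b, max a b) \<in> down P"

definition is_downish :: "mgraph \<Rightarrow> nat \<Rightarrow> nat \<Rightarrow> bool" where
  "is_downish P a b \<longleftrightarrow> (min a b, max a b) \<in> downish P"

definition parking_graph :: "nat \<Rightarrow> mgraph \<Rightarrow> bool" where
  "parking_graph n P \<longleftrightarrow>
     mixed_graph n P \<and>
     acyclic (arcs P) \<and>
     (\<forall>s t m. s \<in> {1..n} \<and> t \<in> {1..n} \<and> m \<in> {1..n} \<and> distinct [s, t, m] \<and>
        (is_down P s t \<or> is_down P t m \<or> is_down P s m) \<and>
        (is_downish P s t \<or> is_downish P t m \<or> is_downish P s m) \<and>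
        (t, s) \<notin> arcs P \<and> (m, s) \<notin> arcs P \<and>  \<comment> \<open>s is the source\<close>
        (t, m) \<notin> arcs P  \<comment> \<open>t is the sink (together with (t,s) not an arc)\<close>
        \<longrightarrow> \<not> is_downish P s t)"

text \<open>State: (y, introduced up edges, introduced down edges). The down step allows any
  choice among the indices attaining the minimal y_j (ties broken arbitrarily).\<close>
type_synonym algA_state = "(nat \<Rightarrow> int) \<times> (nat \<times> nat) set \<times> (nat \<times> nat) set"

definition down_cands :: "nat \<Rightarrow> (nat \<Rightarrow> int) \<Rightarrow> (nat \<times> nat) set \<Rightarrow> nat set" where
  "down_cands n y D = {j \<in> {1..n}. \<exists>k. 1 \<le> k \<and> k < j \<and> 0 < y k \<and> (k, j) \<notin> D}"

inductive algA_step :: "nat \<Rightarrow> algA_state \<Rightarrow> algA_state \<Rightarrow> bool" for n where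
  up_step: "\<lbrakk> j \<in> {1..n}; y j = 0; \<forall>k\<in>{1..n}. y k = 0 \<longrightarrow> k \<le> j \<rbrakk> \<Longrightarrow>
    algA_step n (y, U, D)
      ((\<lambda>k. if k = j then -1
             else if k \<in> {1..n} \<and> j < k \<and> 0 < y k then y k - 1
             else if k \<in> {1..n} \<and> y k < 0 then y k - 1
             else y k),
       U \<union> {(j, k) | k. j < k \<and> k \<le> n \<and> 0 < y k}, D)"
| down_step: "\<lbrakk> \<not> (\<exists>k\<in>{1..n}. y k = 0); \<exists>k\<in>{1..n}. 0 < y k;
      j \<in> down_cands n y D; \<forall>j'\<in>down_cands n y D. y j \<le> y j' \<rbrakk> \<Longrightarrow>
    algA_step n (y, U, D)
      ((\<lambda>k. if 1 \<le> k \<and> k < j \<and> 0 < y k then y k - 1 else y k),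
       U, D \<union> {(k, j) | k. 1 \<le> k \<and> k < j \<and> 0 < y k})"

definition algA_init :: "nat list \<Rightarrow> algA_state" where
  "algA_init x = ((\<lambda>k. if k \<in> {1..length x} then int (x ! (k - 1)) - 1 else -1), {}, {})"

definition algA_output :: "nat list \<Rightarrow> mgraph \<Rightarrow> bool" where
  "algA_output x P \<longleftrightarrow>
     (\<exists>y U D. (algA_step (length x))\<^sup>*\<^sup>* (algA_init x) (y, U, D) \<and>
        (\<forall>k\<in>{1..length x}. y k < 0) \<and>
        P = \<lparr>up = U, down = D, downish = vpairs (length x) - (U \<union> D)\<rparr>)"

definition indeg :: "mgraph \<Rightarrow> nat \<Rightarrow> nat" where
  "indeg P i = card {j. (j, i) \<in> up P} + card {k. (i, k) \<in> down P}"

end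

theory Submission
  imports Defs
begin

(* Algorithm A is analysed through an invariant on its states (y, U, D).  A vertex a
   with y a < 0 has been "settled" (removed by an up step); since every up step
   decrements all negative entries, vertices settled earlier carry smaller values,
   and we write settled_before y a b when a is settled and b is either unsettled or
   settled later.  The invariant says:
   - the up edges are exactly the pairs a < b with settled_before y a b, and every
     down edge k <- j has j settled before k, closed under two exchange rules;
   - for every vertex k, (y k if k is unsettled) + (directed edges into k) = x_k - 1.
   Both up and down steps preserve the invariant; for down steps this uses the
   parking condition, which guarantees that the chosen vertex j is already settled.
   A potential decreases at each step and some step is always possible, so a run
   reaches the stop case.  At the end all vertices are settled, every arc of the
   directed graph goes from a smaller to a larger y-value (hence acyclicity), the
   triangle condition follows from the exchange rules, and the counting part of
   the invariant gives the in-degrees. *)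

text \<open>Vertex a has been settled, and b is unsettled or was settled after a.\<close>
definition settled_before :: "(nat \<Rightarrow> int) \<Rightarrow> nat \<Rightarrow> nat \<Rightarrow> bool" where
  "settled_before y a b \<longleftrightarrow> y a < 0 \<and> (0 \<le> y b \<or> y a < y b)"

definition in_count :: "(nat \<times> nat) set \<Rightarrow> (nat \<times> nat) set \<Rightarrow> nat \<Rightarrow> int" where
  "in_count U D k = int (card {j. (j, k) \<in> U}) + int (card {j. (k, j) \<in> D})"

definition edge_inv :: "nat \<Rightarrow> (nat \<Rightarrow> int) \<Rightarrow> (nat \<times> nat) set \<Rightarrow> (nat \<times> nat) set \<Rightarrow> bool" where
  "edge_inv n y U D \<longleftrightarrow>
   (\<forall>v. v \<notin> {1..n} \<longrightarrow> y v = -1) \<and>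
   (\<forall>a\<in>{1..n}. \<forall>b\<in>{1..n}. y a < 0 \<longrightarrow> y a = y b \<longrightarrow> a = b) \<and>
   (\<forall>a b. (a, b) \<in> U \<longrightarrow> a < b \<and> a \<in> {1..n} \<and> b \<in> {1..n} \<and> settled_before y a b) \<and>
   (\<forall>k j. (k, j) \<in> D \<longrightarrow> k < j \<and> k \<in> {1..n} \<and> j \<in> {1..n} \<and> settled_before y j k) \<and>
   (\<forall>a\<in>{1..n}. \<forall>b\<in>{1..n}. a < b \<longrightarrow> settled_before y a b \<longrightarrow> (a, b) \<in> U) \<and>
   (\<forall>k j k'. (k, j) \<in> D \<longrightarrow> k' \<in> {1..n} \<longrightarrow> k' < j \<longrightarrow> (k', j) \<in> D \<or> settled_before y k' k) \<and>
   (\<forall>k j j'. (k, j) \<in> D \<longrightarrow> j' \<in> {1..n} \<longrightarrow> y j' < y j \<longrightarrow> k < j' \<longrightarrow> (k, j') \<in> D)"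

definition count_inv ::
  "nat \<Rightarrow> (nat \<Rightarrow> int) \<Rightarrow> (nat \<Rightarrow> int) \<Rightarrow> (nat \<times> nat) set \<Rightarrow> (nat \<times> nat) set \<Rightarrow> bool" where
  "count_inv n X y U D \<longleftrightarrow>
   (\<forall>k\<in>{1..n}. (if 0 \<le> y k then y k + in_count U D k else in_count U D k) = X k - 1)"

definition algA_inv ::
  "nat \<Rightarrow> (nat \<Rightarrow> int) \<Rightarrow> (nat \<Rightarrow> int) \<Rightarrow> (nat \<times> nat) set \<Rightarrow> (nat \<times> nat) set \<Rightarrow> bool" where
  "algA_inv n X y U D \<longleftrightarrow> edge_inv n y U D \<and> count_inv n X y U D"

definition parking_count :: "nat \<Rightarrow> (nat \<Rightarrow> int) \<Rightarrow> bool" where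
  "parking_count n X \<longleftrightarrow> (\<forall>m<n. m + 1 \<le> card {i\<in>{1..n}. X i \<le> int (m + 1)})"

text \<open>The preference of car k in the list x (cars are numbered from 1).\<close>
definition pref :: "nat list \<Rightarrow> nat \<Rightarrow> int" where
  "pref x k = int (x ! (k - 1))"

definition up_y :: "nat \<Rightarrow> nat \<Rightarrow> (nat \<Rightarrow> int) \<Rightarrow> nat \<Rightarrow> int" where
  "up_y n j y = (\<lambda>k. if k = j then -1
             else if k \<in> {1..n} \<and> j < k \<and> 0 < y k then y k - 1
             else if k \<in> {1..n} \<and> y k < 0 then y k - 1
             else y k)"

definition up_edges :: "nat \<Rightarrow> nat \<Rightarrow> (nat \<Rightarrow> int) \<Rightarrow> (nat \<times> nat) set" where
  "up_edges n j y = {(j, k) | k. j < k \<and> k \<le> n \<and> 0 < y k}"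

definition down_y :: "nat \<Rightarrow> (nat \<Rightarrow> int) \<Rightarrow> nat \<Rightarrow> int" where
  "down_y j y = (\<lambda>k. if 1 \<le> k \<and> k < j \<and> 0 < y k then y k - 1 else y k)"

definition down_edges :: "nat \<Rightarrow> (nat \<Rightarrow> int) \<Rightarrow> (nat \<times> nat) set" where
  "down_edges j y = {(k, j) | k. 1 \<le> k \<and> k < j \<and> 0 < y k}"

lemma algA_up_step:
  "\<lbrakk> j \<in> {1..n}; y j = 0; \<forall>k\<in>{1..n}. y k = 0 \<longrightarrow> k \<le> j \<rbrakk> \<Longrightarrow>
   algA_step n (y, U, D) (up_y n j y, U \<union> up_edges n j y, D)"
  unfolding up_y_def up_edges_def by (rule algA_step.up_step)

lemma algA_down_step:
  "\<lbrakk> \<not> (\<exists>k\<in>{1..n}. y k = 0); \<exists>k\<in>{1..n}. 0 < y k;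
     j \<in> down_cands n y D; \<forall>j'\<in>down_cands n y D. y j \<le> y j' \<rbrakk> \<Longrightarrow>
   algA_step n (y, U, D) (down_y j y, U, D \<union> down_edges j y)"
  unfolding down_y_def down_edges_def by (rule algA_step.down_step)

lemma algA_step_cases:
  assumes "algA_step n (y, U, D) (y', U', D')"
  obtains (up) j where "j \<in> {1..n}" "y j = 0" "\<forall>k\<in>{1..n}. y k = 0 \<longrightarrow> k \<le> j"
      "y' = up_y n j y" "U' = U \<union> up_edges n j y" "D' = D"
    | (down) j where "\<not> (\<exists>k\<in>{1..n}. y k = 0)" "\<exists>k\<in>{1..n}. 0 < y k"
      "j \<in> down_cands n y D" "\<forall>j'\<in>down_cands n y D. y j \<le> y j'"
      "y' = down_y j y" "U' = U" "D' = D \<union> down_edges j y"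
  using assms by cases (auto simp: up_y_def up_edges_def down_y_def down_edges_def)

lemma inv_out: "edge_inv n y U D \<Longrightarrow> v \<notin> {1..n} \<Longrightarrow> y v = -1"
  unfolding edge_inv_def by blast

lemma inv_distinct:
  "edge_inv n y U D \<Longrightarrow> a \<in> {1..n} \<Longrightarrow> b \<in> {1..n} \<Longrightarrow> y a < 0 \<Longrightarrow> y a = y b \<Longrightarrow> a = b"
  unfolding edge_inv_def by blast

lemma inv_up_edge:
  "edge_inv n y U D \<Longrightarrow> (a, b) \<in> U \<Longrightarrow> a < b \<and> a \<in> {1..n} \<and> b \<in> {1..n} \<and> settled_before y a b"
  unfolding edge_inv_def by blast

lemma inv_down_edge:
  "edge_inv n y U D \<Longrightarrow> (k, j) \<in> D \<Longrightarrow> k < j \<and> k \<in> {1..n} \<and> j \<in> {1..n} \<and> settled_before y j k"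
  unfolding edge_inv_def by blast

lemma inv_up_complete:
  "edge_inv n y U D \<Longrightarrow> a \<in> {1..n} \<Longrightarrow> b \<in> {1..n} \<Longrightarrow> a < b \<Longrightarrow> settled_before y a b \<Longrightarrow> (a, b) \<in> U"
  unfolding edge_inv_def by blast

lemma inv_down_left:
  "edge_inv n y U D \<Longrightarrow> (k, j) \<in> D \<Longrightarrow> k' \<in> {1..n} \<Longrightarrow> k' < j \<Longrightarrow> (k', j) \<in> D \<or> settled_before y k' k"
  unfolding edge_inv_def by blast

lemma inv_down_right:
  "edge_inv n y U D \<Longrightarrow> (k, j) \<in> D \<Longrightarrow> j' \<in> {1..n} \<Longrightarrow> y j' < y j \<Longrightarrow> k < j' \<Longrightarrow> (k, j') \<in> D"
  unfolding edge_inv_def by blast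

lemma inv_count:
  "count_inv n X y U D \<Longrightarrow> k \<in> {1..n} \<Longrightarrow>
   (if 0 \<le> y k then y k + in_count U D k else in_count U D k) = X k - 1"
  unfolding count_inv_def by blast

lemma finite_in_up: "edge_inv n y U D \<Longrightarrow> finite {j. (j, k) \<in> U}"
  by (rule finite_subset[of _ "{1..n}"]) (auto dest: inv_up_edge)

lemma finite_in_down: "edge_inv n y U D \<Longrightarrow> finite {j. (k, j) \<in> D}"
  by (rule finite_subset[of _ "{1..n}"]) (auto dest: inv_down_edge)

section \<open>The up step preserves the invariant\<close>

lemma up_y_values:
  assumes "j \<in> {1..n}" "y j = 0"
  shows up_y_self: "up_y n j y j = -1"
    and up_y_neg_iff: "a \<in> {1..n} \<Longrightarrow> a \<noteq> j \<Longrightarrow> up_y n j y a < 0 \<longleftrightarrow> y a < 0"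
    and up_y_settled: "a \<in> {1..n} \<Longrightarrow> y a < 0 \<Longrightarrow> up_y n j y a = y a - 1"
    and up_y_outside: "a \<notin> {1..n} \<Longrightarrow> up_y n j y a = y a"
  using assms by (auto simp: up_y_def)

lemma settled_before_up:
  assumes "j \<in> {1..n}" "y j = 0" "a \<in> {1..n}" "b \<in> {1..n}" "a \<noteq> j"
  shows "settled_before (up_y n j y) a b \<longleftrightarrow> settled_before y a b"
  using assms by (auto simp: settled_before_def up_y_def)

lemma settled_before_up_self:
  assumes "j \<in> {1..n}" "y j = 0" "b \<in> {1..n}" "b \<noteq> j"
  shows "settled_before (up_y n j y) j b \<longleftrightarrow> 0 \<le> y b"
  using assms by (auto simp: settled_before_def up_y_def)

text \<open>After an up step settled values stay pairwise distinct: j receives -1, while the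
  previously settled vertices drop to values below -1.\<close>
lemma up_step_distinct:
  assumes inv: "edge_inv n y U D" and jN: "j \<in> {1..n}" and yj: "y j = 0"
    and a: "a \<in> {1..n}" and b: "b \<in> {1..n}"
    and neg: "up_y n j y a < 0" and eq: "up_y n j y a = up_y n j y b"
  shows "a = b"
proof -
  note val = up_y_values[where y=y, OF jN yj]
  have old: "y c < 0 \<and> up_y n j y c = y c - 1" if "c \<in> {1..n}" "c \<noteq> j" "up_y n j y c < 0" for c
    using val(2)[OF that(1,2)] val(3)[OF that(1)] that(3) by simp
  show "a = b"
  proof (cases "a = j \<or> b = j")
    case True
    then show ?thesis using old[OF a] old[OF b] val(1) neg eq by fastforce
  next
    case False
    then have "y a < 0" "y b < 0" "y a = y b" using old[OF a] old[OF b] neg eq by auto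
    then show ?thesis using inv_distinct[OF inv a b] by blast
  qed
qed

text \<open>After an up step the up edges are again all pairs a < b with a settled before b.
  For a = j this is where the choice of j as the largest zero entry is needed.\<close>
lemma up_step_complete:
  assumes inv: "edge_inv n y U D" and jN: "j \<in> {1..n}" and yj: "y j = 0"
    and jmax: "\<forall>k\<in>{1..n}. y k = 0 \<longrightarrow> k \<le> j"
    and a: "a \<in> {1..n}" and b: "b \<in> {1..n}" and ab: "a < b"
    and sb: "settled_before (up_y n j y) a b"
  shows "(a, b) \<in> U \<union> up_edges n j y"
proof (cases "a = j")
  case True
  then have "0 \<le> y b" using settled_before_up_self[where y=y, OF jN yj b] sb ab by simp
  moreover have "y b \<noteq> 0" using jmax b ab True by auto
  ultimately show ?thesis using True ab b unfolding up_edges_def by auto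
next
  case False
  then have "settled_before y a b" using settled_before_up[where y=y, OF jN yj a b] sb by blast
  then show ?thesis using inv_up_complete[OF inv a b ab] by simp
qed

lemma edge_inv_up:
  assumes inv: "edge_inv n y U D"
    and jN: "j \<in> {1..n}" and yj: "y j = 0" and jmax: "\<forall>k\<in>{1..n}. y k = 0 \<longrightarrow> k \<le> j"
  shows "edge_inv n (up_y n j y) (U \<union> up_edges n j y) D"
proof -
  define y' where "y' = up_y n j y"
  define U' where "U' = U \<union> up_edges n j y"
  note val = up_y_values[where y=y, OF jN yj, folded y'_def]
  have keep: "settled_before y' a b" if "a \<in> {1..n}" "b \<in> {1..n}" "settled_before y a b" for a b
  proof -
    have "a \<noteq> j" using that(3) yj unfolding settled_before_def by auto
    then show ?thesis using settled_before_up[where y=y, OF jN yj that(1,2)] that(3) unfolding y'_def by blast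
  qed
  have out: "\<forall>v. v \<notin> {1..n} \<longrightarrow> y' v = -1" using val(4) inv_out[OF inv] by simp
  have distinct: "\<forall>a\<in>{1..n}. \<forall>b\<in>{1..n}. y' a < 0 \<longrightarrow> y' a = y' b \<longrightarrow> a = b"
    using up_step_distinct[OF inv jN yj] unfolding y'_def by blast
  have up_ok: "\<forall>a b. (a, b) \<in> U' \<longrightarrow> a < b \<and> a \<in> {1..n} \<and> b \<in> {1..n} \<and> settled_before y' a b"
  proof (intro allI impI)
    fix a b assume "(a, b) \<in> U'"
    then consider "(a, b) \<in> U" | "a = j" "j < b" "b \<le> n" "0 < y b"
      unfolding U'_def up_edges_def by blast
    then show "a < b \<and> a \<in> {1..n} \<and> b \<in> {1..n} \<and> settled_before y' a b"
    proof cases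
      case 1 then show ?thesis using inv_up_edge[OF inv] keep by blast
    next
      case 2
      then have "b \<in> {1..n}" using jN by auto
      then show ?thesis using 2 jN settled_before_up_self[where y=y, OF jN yj] unfolding y'_def by auto
    qed
  qed
  have down_ok: "\<forall>k j. (k, j) \<in> D \<longrightarrow> k < j \<and> k \<in> {1..n} \<and> j \<in> {1..n} \<and> settled_before y' j k"
    using inv_down_edge[OF inv] keep by blast
  have up_complete: "\<forall>a\<in>{1..n}. \<forall>b\<in>{1..n}. a < b \<longrightarrow> settled_before y' a b \<longrightarrow> (a, b) \<in> U'"
    using up_step_complete[OF inv jN yj jmax] unfolding y'_def U'_def by blast
  have down_left: "\<forall>k j k'. (k, j) \<in> D \<longrightarrow> k' \<in> {1..n} \<longrightarrow> k' < j \<longrightarrow> (k', j) \<in> D \<or> settled_before y' k' k"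
    using inv_down_left[OF inv] inv_down_edge[OF inv] keep by blast
  have down_right: "\<forall>k i i'. (k, i) \<in> D \<longrightarrow> i' \<in> {1..n} \<longrightarrow> y' i' < y' i \<longrightarrow> k < i' \<longrightarrow> (k, i') \<in> D"
  proof (intro allI impI)
    fix k i i' assume ki: "(k, i) \<in> D" and i': "i' \<in> {1..n}" and lt: "y' i' < y' i" and ki': "k < i'"
    have iN: "i \<in> {1..n}" and yi: "y i < 0"
      using inv_down_edge[OF inv ki] unfolding settled_before_def by auto
    have "i' \<noteq> j" using lt val(1) val(3)[OF iN yi] yi by auto
    then have "y i' < 0" using val(2)[OF i'] val(3)[OF iN yi] lt yi by simp
    then have "y i' < y i" using val(3)[OF i'] val(3)[OF iN yi] lt by simp
    then show "(k, i') \<in> D" using inv_down_right[OF inv ki i' _ ki'] by simp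
  qed
  show ?thesis
    unfolding y'_def[symmetric] U'_def[symmetric] edge_inv_def
    by (intro conjI out distinct up_ok down_ok up_complete down_left down_right)
qed

lemma in_count_up:
  assumes inv: "edge_inv n y U D" and yj: "y j = 0" and kN: "k \<in> {1..n}"
  shows "in_count (U \<union> up_edges n j y) D k = in_count U D k + (if j < k \<and> 0 < y k then 1 else 0)"
proof -
  have fresh: "j \<notin> {i. (i, k) \<in> U}"
    using inv_up_edge[OF inv, of j k] yj unfolding settled_before_def by auto
  have in_edges: "{i. (i, k) \<in> U \<union> up_edges n j y} =
        (if j < k \<and> 0 < y k then insert j {i. (i, k) \<in> U} else {i. (i, k) \<in> U})"
    using kN unfolding up_edges_def by auto
  show ?thesis
  proof (cases "j < k \<and> 0 < y k")
    case True
    then have "card {i. (i, k) \<in> U \<union> up_edges n j y} = card {i. (i, k) \<in> U} + 1"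
      using fresh finite_in_up[OF inv, of k] unfolding in_edges if_P[OF True] by simp
    then show ?thesis using True unfolding in_count_def by simp
  next
    case False
    then show ?thesis unfolding in_count_def in_edges if_not_P[OF False] by simp
  qed
qed

lemma count_inv_up:
  assumes inv: "edge_inv n y U D" and cinv: "count_inv n X y U D"
    and jN: "j \<in> {1..n}" and yj: "y j = 0"
  shows "count_inv n X (up_y n j y) (U \<union> up_edges n j y) D"
  unfolding count_inv_def
proof
  fix k assume kN: "k \<in> {1..n}"
  show "(if 0 \<le> up_y n j y k then up_y n j y k + in_count (U \<union> up_edges n j y) D k
         else in_count (U \<union> up_edges n j y) D k) = X k - 1"
    using inv_count[OF cinv kN] in_count_up[OF inv yj kN] yj kN by (auto simp: up_y_def)
qed

section \<open>Down steps: the chosen vertex is settled\<close>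

text \<open>If no settled vertex is a down candidate, then every unsettled vertex k is already
  joined to every settled vertex by an edge into k.\<close>
lemma in_count_ge_settled:
  assumes inv: "edge_inv n y U D" and kN: "k \<in> {1..n}" and yk: "0 < y k"
    and no_settled: "\<forall>j\<in>down_cands n y D. 0 \<le> y j"
  shows "int (card {v\<in>{1..n}. y v < 0}) \<le> in_count U D k"
proof -
  define R where "R = {v\<in>{1..n}. y v < 0}"
  have below: "{j\<in>R. j < k} \<subseteq> {j. (j, k) \<in> U}"
  proof
    fix j assume "j \<in> {j\<in>R. j < k}"
    then show "j \<in> {j. (j, k) \<in> U}"
      using inv_up_complete[OF inv _ kN] yk unfolding R_def settled_before_def by auto
  qed
  have above: "{j\<in>R. k < j} \<subseteq> {j. (k, j) \<in> D}"
  proof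
    fix j assume j: "j \<in> {j\<in>R. k < j}"
    show "j \<in> {j. (k, j) \<in> D}"
    proof (rule ccontr)
      assume "j \<notin> {j. (k, j) \<in> D}"
      then have "j \<in> down_cands n y D" using j kN yk unfolding down_cands_def R_def by auto
      then show False using no_settled j unfolding R_def by auto
    qed
  qed
  have "k \<notin> R" using yk unfolding R_def by auto
  then have "j < k \<or> k < j" if "j \<in> R" for j
    using that by (cases j k rule: linorder_cases) auto
  then have "R = {j\<in>R. j < k} \<union> {j\<in>R. k < j}" by blast
  moreover have "card ({j\<in>R. j < k} \<union> {j\<in>R. k < j}) = card {j\<in>R. j < k} + card {j\<in>R. k < j}"
    by (rule card_Un_disjoint) (auto simp: R_def)
  ultimately have "card R = card {j\<in>R. j < k} + card {j\<in>R. k < j}" by simp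
  also have "\<dots> \<le> card {j. (j, k) \<in> U} + card {j. (k, j) \<in> D}"
    using card_mono[OF finite_in_up[OF inv] below] card_mono[OF finite_in_down[OF inv] above]
    by simp
  finally show ?thesis unfolding R_def in_count_def by linarith
qed

text \<open>The key use of the parking condition: when a down step is due, some settled
  vertex is a down candidate, so the candidate of minimal value is settled.\<close>
lemma settled_down_candidate:
  assumes inv: "edge_inv n y U D" and cinv: "count_inv n X y U D" and pc: "parking_count n X"
    and no_zero: "\<not> (\<exists>k\<in>{1..n}. y k = 0)" and pos: "\<exists>k\<in>{1..n}. 0 < y k"
  shows "\<exists>j\<in>down_cands n y D. y j < 0"
proof (rule ccontr)
  assume "\<not> ?thesis"
  then have no_settled: "\<forall>j\<in>down_cands n y D. 0 \<le> y j" by force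
  define R where "R = {v\<in>{1..n}. y v < 0}"
  have large: "int (card R) + 2 \<le> X k" if "k \<in> {1..n}" "k \<notin> R" for k
  proof -
    have yk: "0 < y k" using that no_zero unfolding R_def by force
    have "y k + in_count U D k = X k - 1" using inv_count[OF cinv that(1)] yk by simp
    then show ?thesis using in_count_ge_settled[OF inv that(1) yk no_settled] yk
      unfolding R_def by linarith
  qed
  obtain k0 where k0: "k0 \<in> {1..n}" "0 < y k0" using pos by blast
  then have "R \<subseteq> {1..n}" "k0 \<notin> R" unfolding R_def by auto
  then have "R \<subset> {1..n}" using k0(1) by blast
  then have "card R < n" using psubset_card_mono[of "{1..n}" R] by simp
  then have "card R + 1 \<le> card {i\<in>{1..n}. X i \<le> int (card R + 1)}"
    using pc unfolding parking_count_def by blast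
  moreover have "{i\<in>{1..n}. X i \<le> int (card R + 1)} \<subseteq> R"
    using large by force
  then have "card {i\<in>{1..n}. X i \<le> int (card R + 1)} \<le> card R"
    by (rule card_mono[rotated]) (simp add: R_def)
  ultimately show False by simp
qed

section \<open>The down step preserves the invariant\<close>

lemma down_y_values:
  shows down_y_neg_iff: "down_y j y a < 0 \<longleftrightarrow> y a < 0"
    and down_y_settled: "y a < 0 \<Longrightarrow> down_y j y a = y a"
  by (auto simp: down_y_def)

lemma settled_before_down: "settled_before (down_y j y) a b \<longleftrightarrow> settled_before y a b"
  by (auto simp: settled_before_def down_y_def)

text \<open>The first exchange rule survives a down step: for the new edges k <- j, every
  k' < j is either unsettled, hence also joined to j, or settled before k.\<close>
lemma down_step_exchange_left:
  assumes inv: "edge_inv n y U D" and no_zero: "\<not> (\<exists>k\<in>{1..n}. y k = 0)"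
    and ki: "(k, i) \<in> D \<union> down_edges j y" and k': "k' \<in> {1..n}" and lt: "k' < i"
  shows "(k', i) \<in> D \<union> down_edges j y \<or> settled_before (down_y j y) k' k"
proof -
  from ki consider "(k, i) \<in> D" | "i = j" "1 \<le> k" "k < j" "0 < y k"
    unfolding down_edges_def by blast
  then show ?thesis
  proof cases
    case 1 then show ?thesis using inv_down_left[OF inv 1 k' lt] settled_before_down by blast
  next
    case 2
    show ?thesis
    proof (cases "0 < y k'")
      case True then show ?thesis using 2 k' lt unfolding down_edges_def by auto
    next
      case False
      then have "y k' < 0" using no_zero k' by force
      then have "down_y j y k' < 0" "\<not> down_y j y k < 0" using 2 down_y_neg_iff by auto
      then show ?thesis by (simp add: settled_before_def)
    qed
  qed
qed

text \<open>The second exchange rule survives a down step; for the new edges k <- j this is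
  exactly the minimality of y j among the down candidates.\<close>
lemma down_step_exchange_right:
  assumes inv: "edge_inv n y U D"
    and jc: "j \<in> down_cands n y D" and jmin: "\<forall>j'\<in>down_cands n y D. y j \<le> y j'" and yj: "y j < 0"
    and ki: "(k, i) \<in> D \<union> down_edges j y" and i': "i' \<in> {1..n}"
    and lt: "down_y j y i' < down_y j y i" and ki': "k < i'"
  shows "(k, i') \<in> D \<union> down_edges j y"
proof -
  note neg_iff = down_y_neg_iff[where j=j and y=y] and settled = down_y_settled[where j=j and y=y]
  from ki consider "(k, i) \<in> D" | "i = j" "1 \<le> k" "k < j" "0 < y k"
    unfolding down_edges_def by blast
  then show ?thesis
  proof cases
    case 1
    have yi: "y i < 0" using inv_down_edge[OF inv 1] unfolding settled_before_def by simp
    then have "y i' < 0" using lt neg_iff settled by force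
    then have "y i' < y i" using lt settled yi by simp
    then show ?thesis using inv_down_right[OF inv 1 i' _ ki'] by blast
  next
    case 2
    then have "y i' < 0" using lt neg_iff settled yj by force
    then have lt_j: "y i' < y j" using lt settled yj 2 by simp
    show ?thesis
    proof (rule ccontr)
      assume "\<not> ?thesis"
      then have "i' \<in> down_cands n y D" using i' 2 ki' unfolding down_cands_def by auto
      then show False using jmin lt_j by force
    qed
  qed
qed

lemma edge_inv_down:
  assumes inv: "edge_inv n y U D" and no_zero: "\<not> (\<exists>k\<in>{1..n}. y k = 0)"
    and jc: "j \<in> down_cands n y D" and jmin: "\<forall>j'\<in>down_cands n y D. y j \<le> y j'"
    and yj: "y j < 0"
  shows "edge_inv n (down_y j y) U (D \<union> down_edges j y)"
proof -
  define y' where "y' = down_y j y"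
  define D' where "D' = D \<union> down_edges j y"
  note neg_iff = down_y_neg_iff[where j=j and y=y, folded y'_def]
    and settled = down_y_settled[where j=j and y=y, folded y'_def]
    and order = settled_before_down[where j=j and y=y, folded y'_def]
  have jN: "j \<in> {1..n}" using jc unfolding down_cands_def by simp
  have out: "\<forall>v. v \<notin> {1..n} \<longrightarrow> y' v = -1"
    using inv_out[OF inv] jN unfolding y'_def down_y_def by auto
  have distinct: "\<forall>a\<in>{1..n}. \<forall>b\<in>{1..n}. y' a < 0 \<longrightarrow> y' a = y' b \<longrightarrow> a = b"
  proof (intro ballI impI)
    fix a b assume a: "a \<in> {1..n}" and b: "b \<in> {1..n}" and neg: "y' a < 0" and eq: "y' a = y' b"
    have "y' b < 0" using neg eq by simp
    then have ya: "y a < 0" and yb: "y b < 0" using neg neg_iff by blast+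
    then have "y a = y b" using eq settled by simp
    then show "a = b" using inv_distinct[OF inv a b ya] by blast
  qed
  have up_ok: "\<forall>a b. (a, b) \<in> U \<longrightarrow> a < b \<and> a \<in> {1..n} \<and> b \<in> {1..n} \<and> settled_before y' a b"
    using inv_up_edge[OF inv] by (simp add: order)
  have down_ok: "\<forall>k i. (k, i) \<in> D' \<longrightarrow> k < i \<and> k \<in> {1..n} \<and> i \<in> {1..n} \<and> settled_before y' i k"
  proof (intro allI impI)
    fix k i assume "(k, i) \<in> D'"
    then consider "(k, i) \<in> D" | "i = j" "1 \<le> k" "k < j" "0 < y k"
      unfolding D'_def down_edges_def by blast
    then show "k < i \<and> k \<in> {1..n} \<and> i \<in> {1..n} \<and> settled_before y' i k"
    proof cases
      case 1 then show ?thesis using inv_down_edge[OF inv 1] by (simp add: order)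
    next
      case 2
      have "y' j < 0" "\<not> y' k < 0" using yj 2 neg_iff by auto
      then show ?thesis using 2 jN unfolding settled_before_def by auto
    qed
  qed
  have up_complete: "\<forall>a\<in>{1..n}. \<forall>b\<in>{1..n}. a < b \<longrightarrow> settled_before y' a b \<longrightarrow> (a, b) \<in> U"
    using inv_up_complete[OF inv] by (simp add: order)
  have down_left:
    "\<forall>k i k'. (k, i) \<in> D' \<longrightarrow> k' \<in> {1..n} \<longrightarrow> k' < i \<longrightarrow> (k', i) \<in> D' \<or> settled_before y' k' k"
    using down_step_exchange_left[OF inv no_zero] unfolding y'_def D'_def by blast
  have down_right:
    "\<forall>k i i'. (k, i) \<in> D' \<longrightarrow> i' \<in> {1..n} \<longrightarrow> y' i' < y' i \<longrightarrow> k < i' \<longrightarrow> (k, i') \<in> D'"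
    using down_step_exchange_right[OF inv jc jmin yj] unfolding y'_def D'_def by blast
  show ?thesis
    unfolding y'_def[symmetric] D'_def[symmetric] edge_inv_def
    by (intro conjI out distinct up_ok down_ok up_complete down_left down_right)
qed

lemma in_count_down:
  assumes inv: "edge_inv n y U D" and jc: "j \<in> down_cands n y D"
  shows "in_count U (D \<union> down_edges j y) k =
         in_count U D k + (if 1 \<le> k \<and> k < j \<and> 0 < y k then 1 else 0)"
proof -
  obtain k0 where k0: "1 \<le> k0" "k0 < j" "0 < y k0" "(k0, j) \<notin> D" and jN: "j \<in> {1..n}"
    using jc unfolding down_cands_def by blast
  have fresh: "j \<notin> {i. (k, i) \<in> D}" if "0 < y k"
  proof
    assume "j \<in> {i. (k, i) \<in> D}"
    then have "(k0, j) \<in> D \<or> settled_before y k0 k" using inv_down_left[OF inv, of k j k0] k0 jN by auto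
    then show False using k0 unfolding settled_before_def by auto
  qed
  have out_edges: "{i. (k, i) \<in> D \<union> down_edges j y} =
        (if 1 \<le> k \<and> k < j \<and> 0 < y k then insert j {i. (k, i) \<in> D} else {i. (k, i) \<in> D})"
    unfolding down_edges_def by auto
  show ?thesis
  proof (cases "1 \<le> k \<and> k < j \<and> 0 < y k")
    case True
    then have "card {i. (k, i) \<in> D \<union> down_edges j y} = card {i. (k, i) \<in> D} + 1"
      using fresh finite_in_down[OF inv, of k] unfolding out_edges if_P[OF True] by simp
    then show ?thesis using True unfolding in_count_def by simp
  next
    case False
    then show ?thesis unfolding in_count_def out_edges if_not_P[OF False] by simp
  qed
qed

lemma count_inv_down:
  assumes inv: "edge_inv n y U D" and cinv: "count_inv n X y U D" and jc: "j \<in> down_cands n y D"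
  shows "count_inv n X (down_y j y) U (D \<union> down_edges j y)"
  unfolding count_inv_def
proof
  fix k assume kN: "k \<in> {1..n}"
  note old = inv_count[OF cinv kN] and new = in_count_down[OF inv jc, of k]
  show "(if 0 \<le> down_y j y k then down_y j y k + in_count U (D \<union> down_edges j y) k
         else in_count U (D \<union> down_edges j y) k) = X k - 1"
  proof (cases "1 \<le> k \<and> k < j \<and> 0 < y k")
    case True
    then show ?thesis using old new by (simp add: down_y_def)
  next
    case False
    then have same_y: "down_y j y k = y k" by (simp add: down_y_def)
    have same_count: "in_count U (D \<union> down_edges j y) k = in_count U D k"
      unfolding new if_not_P[OF False] by simp
    show ?thesis unfolding same_y same_count by (rule old)
  qed
qed

section \<open>Runs of Algorithm A\<close>

text \<open>Each step preserves the invariant; a down step picks a settled vertex j by the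
  parking condition.\<close>
lemma algA_inv_step:
  assumes step: "algA_step n (y, U, D) (y', U', D')"
    and inv: "algA_inv n X y U D" and pc: "parking_count n X"
  shows "algA_inv n X y' U' D'"
  using step
proof (cases rule: algA_step_cases)
  case (up j)
  then show ?thesis using inv edge_inv_up count_inv_up unfolding algA_inv_def by simp
next
  case (down j)
  have einv: "edge_inv n y U D" and cinv: "count_inv n X y U D" using inv unfolding algA_inv_def by auto
  obtain j' where "j' \<in> down_cands n y D" "y j' < 0"
    using settled_down_candidate[OF einv cinv pc down(1,2)] by blast
  then have "y j < 0" using down(4) by force
  then show ?thesis
    using down edge_inv_down[OF einv] count_inv_down[OF einv cinv] unfolding algA_inv_def by simp
qed

lemma algA_inv_reachable:
  assumes "(algA_step n)\<^sup>*\<^sup>* (y, U, D) (y', U', D')"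
    and "algA_inv n X y U D" and pc: "parking_count n X"
  shows "algA_inv n X y' U' D'"
proof -
  have "case s of (y', U', D') \<Rightarrow> algA_inv n X y' U' D'" if "(algA_step n)\<^sup>*\<^sup>* (y, U, D) s" for s
    using that
  proof (induction rule: rtranclp_induct)
    case base
    then show ?case using assms(2) by simp
  next
    case (step s1 s2)
    then show ?case using algA_inv_step[OF _ _ pc] by (cases s1; cases s2) auto
  qed
  then show ?thesis using assms(1) by force
qed

definition potential :: "nat \<Rightarrow> (nat \<Rightarrow> int) \<Rightarrow> nat" where
  "potential n y = (\<Sum>v\<in>{1..n}. nat (y v + 1))"

lemma potential_decreases:
  assumes "algA_step n (y, U, D) (y', U', D')"
  shows "potential n y' < potential n y"
  using assms
proof (cases rule: algA_step_cases)
  case (up j)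
  show ?thesis unfolding potential_def
  proof (rule sum_strict_mono_ex1)
    show "\<forall>v\<in>{1..n}. nat (y' v + 1) \<le> nat (y v + 1)" using up by (auto simp: up_y_def)
    show "\<exists>v\<in>{1..n}. nat (y' v + 1) < nat (y v + 1)" using up by (auto simp: up_y_def)
  qed simp
next
  case (down j)
  obtain k where "1 \<le> k" "k < j" "0 < y k" "j \<in> {1..n}"
    using down(3) unfolding down_cands_def by blast
  show ?thesis unfolding potential_def
  proof (rule sum_strict_mono_ex1)
    show "\<forall>v\<in>{1..n}. nat (y' v + 1) \<le> nat (y v + 1)" using down by (auto simp: down_y_def)
    show "\<exists>v\<in>{1..n}. nat (y' v + 1) < nat (y v + 1)"
      using down \<open>1 \<le> k\<close> \<open>k < j\<close> \<open>0 < y k\<close> \<open>j \<in> {1..n}\<close>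
      by (intro bexI[of _ k]) (auto simp: down_y_def)
  qed simp
qed

lemma algA_step_exists:
  assumes inv: "algA_inv n X y U D" and pc: "parking_count n X"
    and unsettled: "\<not> (\<forall>k\<in>{1..n}. y k < 0)"
  shows "\<exists>y' U' D'. algA_step n (y, U, D) (y', U', D')"
proof (cases "\<exists>k\<in>{1..n}. y k = 0")
  case True
  define Z where "Z = {k\<in>{1..n}. y k = 0}"
  have "finite Z" "Z \<noteq> {}" using True unfolding Z_def by auto
  then have "Max Z \<in> Z" "\<forall>k\<in>Z. k \<le> Max Z" by auto
  then have "Max Z \<in> {1..n}" "y (Max Z) = 0" "\<forall>k\<in>{1..n}. y k = 0 \<longrightarrow> k \<le> Max Z"
    unfolding Z_def by auto
  then show ?thesis using algA_up_step by blast
next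
  case no_zero: False
  have pos: "\<exists>k\<in>{1..n}. 0 < y k" using no_zero unsettled by force
  define C where "C = down_cands n y D"
  have "finite C" unfolding C_def down_cands_def by simp
  moreover have "C \<noteq> {}"
    using settled_down_candidate[OF _ _ pc no_zero pos] inv unfolding C_def algA_inv_def by blast
  ultimately obtain j where j: "j \<in> C" "Min (y ` C) = y j" by (rule obtains_MIN)
  have "y j \<le> y j'" if "j' \<in> C" for j'
    using Min_le[of "y ` C" "y j'"] \<open>finite C\<close> that j(2) by simp
  then show ?thesis using algA_down_step[OF no_zero pos] j(1) unfolding C_def by blast
qed

lemma algA_terminates:
  assumes "algA_inv n X y U D" and pc: "parking_count n X"
  shows "\<exists>y' U' D'. (algA_step n)\<^sup>*\<^sup>* (y, U, D) (y', U', D') \<and> (\<forall>k\<in>{1..n}. y' k < 0)"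
  using assms(1)
proof (induction "potential n y" arbitrary: y U D rule: less_induct)
  case less
  show ?case
  proof (cases "\<forall>k\<in>{1..n}. y k < 0")
    case False
    then obtain y1 U1 D1 where step: "algA_step n (y, U, D) (y1, U1, D1)"
      using algA_step_exists[OF less.prems pc] by blast
    then obtain y' U' D' where "(algA_step n)\<^sup>*\<^sup>* (y1, U1, D1) (y', U', D')" "\<forall>k\<in>{1..n}. y' k < 0"
      using less.hyps[OF potential_decreases[OF step]] algA_inv_step[OF step less.prems pc] by blast
    then show ?thesis using step by (meson converse_rtranclp_into_rtranclp)
  qed blast
qed

section \<open>The output graph\<close>

definition output_graph :: "nat \<Rightarrow> (nat \<times> nat) set \<Rightarrow> (nat \<times> nat) set \<Rightarrow> mgraph" where
  "output_graph n U D = \<lparr>up = U, down = D, downish = vpairs n - (U \<union> D)\<rparr>"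

lemma acyclic_increasing: "acyclic {(a, b). (f a :: 'b :: order) < f b}"
proof -
  have "trans {(a, b). (f a :: 'b) < f b}" by (auto simp: trans_def)
  then show ?thesis unfolding acyclic_def trancl_id by simp
qed

lemma settled_before_final:
  assumes "\<forall>k\<in>{1..n}. y k < 0" "a \<in> {1..n}" "b \<in> {1..n}"
  shows "settled_before y a b \<longleftrightarrow> y a < y b"
  using assms unfolding settled_before_def by force

lemma output_mixed_graph:
  assumes inv: "edge_inv n y U D" and settled: "\<forall>k\<in>{1..n}. y k < 0"
  shows "mixed_graph n (output_graph n U D)"
proof -
  have "U \<subseteq> vpairs n" using inv_up_edge[OF inv] unfolding vpairs_def by fastforce
  moreover have "D \<subseteq> vpairs n" using inv_down_edge[OF inv] unfolding vpairs_def by fastforce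
  moreover have "U \<inter> D = {}"
  proof (rule ccontr)
    assume "U \<inter> D \<noteq> {}"
    then obtain a b where ab: "(a, b) \<in> U" "(a, b) \<in> D" by auto
    have "y a < y b" using inv_up_edge[OF inv ab(1)] settled_before_final[OF settled] by blast
    moreover have "y b < y a" using inv_down_edge[OF inv ab(2)] settled_before_final[OF settled] by blast
    ultimately show False by simp
  qed
  ultimately show ?thesis unfolding mixed_graph_def output_graph_def by auto
qed

lemma output_arc_increasing:
  assumes inv: "edge_inv n y U D" and settled: "\<forall>k\<in>{1..n}. y k < 0"
    and arc: "(a, b) \<in> arcs (output_graph n U D)"
  shows "a \<in> {1..n} \<and> b \<in> {1..n} \<and> y a < y b"
proof -
  note order = settled_before_final[OF settled]
  from arc consider "(a, b) \<in> U" | "(b, a) \<in> D" | "(b, a) \<in> vpairs n - (U \<union> D)"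
    unfolding arcs_def output_graph_def by auto
  then show ?thesis
  proof cases
    case 1 then show ?thesis using inv_up_edge[OF inv 1] order by blast
  next
    case 2 then show ?thesis using inv_down_edge[OF inv 2] order by blast
  next
    case 3
    then have bN: "b \<in> {1..n}" and aN: "a \<in> {1..n}" and ba: "b < a" unfolding vpairs_def by auto
    have "\<not> y b < y a" using 3 inv_up_complete[OF inv bN aN ba] order[OF bN aN] by blast
    moreover have "y b \<noteq> y a" using inv_distinct[OF inv bN aN] settled bN ba by fastforce
    ultimately show ?thesis using aN bN by simp
  qed
qed

lemma output_acyclic:
  assumes "edge_inv n y U D" and "\<forall>k\<in>{1..n}. y k < 0"
  shows "acyclic (arcs (output_graph n U D))"
  by (rule acyclic_subset[OF acyclic_increasing[of y]])
     (use output_arc_increasing[OF assms] in auto)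

lemma output_arcs_total:
  assumes "a \<in> {1..n}" "b \<in> {1..n}" "a \<noteq> b"
  shows "(a, b) \<in> arcs (output_graph n U D) \<or> (b, a) \<in> arcs (output_graph n U D)"
proof -
  have "(min a b, max a b) \<in> vpairs n" using assms unfolding vpairs_def by (auto simp: min_def max_def)
  then show ?thesis using assms unfolding arcs_def output_graph_def
    by (cases "a < b") (auto simp: min_def max_def)
qed

text \<open>The exchange rules of the
  invariant rule out each position of the down edge.\<close>
lemma output_triangle:
  assumes inv: "edge_inv n y U D" and settled: "\<forall>k\<in>{1..n}. y k < 0"
    and N: "s \<in> {1..n}" "t \<in> {1..n}" "m \<in> {1..n}"
    and order: "y s < y m" "y m < y t"
    and down: "is_down P s t \<or> is_down P t m \<or> is_down P s m"
    and P: "P = output_graph n U D"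
  shows "\<not> is_downish P s t"
proof
  assume downish: "is_downish P s t"
  have "\<not> s < t"
  proof
    assume "s < t"
    then have "(s, t) \<in> U"
      using inv_up_complete[OF inv N(1,2)] settled_before_final[OF settled N(1,2)] order by fastforce
    then show False using downish \<open>s < t\<close> unfolding is_downish_def P output_graph_def by simp
  qed
  moreover have "s \<noteq> t" using order by auto
  ultimately have ts: "t < s" by simp
  have not_down: "(t, s) \<notin> D" using downish ts unfolding is_downish_def P output_graph_def by simp
  have down_edge: "(min a b, max a b) \<in> D" if "is_down P a b" for a b
    using that unfolding is_down_def P output_graph_def by simp
  have down_edge_order: "y b < y a" if "(a, b) \<in> D" for a b
    using inv_down_edge[OF inv that] settled_before_final[OF settled] by blast
  from down show False
  proof (elim disjE)
    assume "is_down P s t"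
    then show False using down_edge[of s t] not_down ts by (simp add: min_def max_def)
  next
    assume tm: "is_down P t m"
    show False
    proof (cases "m < t")
      case True
      then show False using down_edge[OF tm] down_edge_order[of m t] order by (simp add: min_def max_def)
    next
      case False
      then have "(t, m) \<in> D" using down_edge[OF tm] by (simp add: min_def max_def)
      then show False using inv_down_right[OF inv _ N(1) order(1) ts] not_down by blast
    qed
  next
    assume sm: "is_down P s m"
    show False
    proof (cases "s < m")
      case True
      then show False using down_edge[OF sm] down_edge_order[of s m] order by (simp add: min_def max_def)
    next
      case False
      then have "(m, s) \<in> D" using down_edge[OF sm] order(1) by (cases "s = m") (auto simp: min_def max_def)
      then show False using inv_down_left[OF inv _ N(2) ts] not_down
          settled_before_final[OF settled N(2,3)] order by fastforce
    qed
  qed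
qed

lemma output_parking_graph:
  assumes inv: "edge_inv n y U D" and settled: "\<forall>k\<in>{1..n}. y k < 0"
  shows "parking_graph n (output_graph n U D)"
  unfolding parking_graph_def
proof (intro conjI allI impI)
  show "mixed_graph n (output_graph n U D)" by (rule output_mixed_graph[OF assms])
  show "acyclic (arcs (output_graph n U D))" by (rule output_acyclic[OF assms])
next
  fix s t m
  let ?P = "output_graph n U D"
  assume H: "s \<in> {1..n} \<and> t \<in> {1..n} \<and> m \<in> {1..n} \<and> distinct [s, t, m] \<and>
    (is_down ?P s t \<or> is_down ?P t m \<or> is_down ?P s m) \<and>
    (is_downish ?P s t \<or> is_downish ?P t m \<or> is_downish ?P s m) \<and>
    (t, s) \<notin> arcs ?P \<and> (m, s) \<notin> arcs ?P \<and> (t, m) \<notin> arcs ?P"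
  then have N: "s \<in> {1..n}" "t \<in> {1..n}" "m \<in> {1..n}" by auto
  have arc: "(a, b) \<in> arcs ?P" if "a \<in> {1..n}" "b \<in> {1..n}" "a \<noteq> b" "(b, a) \<notin> arcs ?P" for a b
    using output_arcs_total[OF that(1-3)] that(4) by blast
  have "y s < y m" "y m < y t"
    using output_arc_increasing[OF assms arc] N H by auto
  then show "\<not> is_downish ?P s t" using output_triangle[OF assms N] H by blast
qed

text \<open>In the stop case every vertex is settled, so the counting invariant reads
  indegree = preference - 1.\<close>
lemma output_indeg:
  assumes "count_inv n X y U D" and "\<forall>k\<in>{1..n}. y k < 0" and "i \<in> {1..n}"
  shows "int (indeg (output_graph n U D) i) = X i - 1"
proof -
  have "y i < 0" using assms(2,3) by blast
  then show ?thesis using inv_count[OF assms(1,3)] unfolding indeg_def in_count_def output_graph_def by simp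
qed

lemma parking_function_pos:
  assumes "parking_function x" "i \<in> {1..length x}"
  shows "1 \<le> x ! (i - 1)"
  using assms unfolding parking_function_def by (auto simp: Ball_def)

lemma parking_count_pref:
  assumes "parking_function x"
  shows "parking_count (length x) (pref x)"
  unfolding parking_count_def
proof (intro allI impI)
  fix m assume m: "m < length x"
  define s where "s = sort x"
  have "s ! i \<le> m + 1" if "i \<le> m" for i
  proof -
    have "s ! i \<le> s ! m" using that m unfolding s_def by (simp add: sorted_nth_mono)
    also have "\<dots> \<le> m + 1" using assms m unfolding parking_function_def s_def by simp
    finally show ?thesis .
  qed
  then have "{0..m} \<subseteq> {i. i < length s \<and> s ! i \<le> m + 1}" using m unfolding s_def by auto
  then have "m + 1 \<le> card {i. i < length s \<and> s ! i \<le> m + 1}" using card_mono[of _ "{0..m}"] by simp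
  also have "\<dots> = length (filter (\<lambda>v. v \<le> m + 1) s)" by (simp add: length_filter_conv_card)
  also have "\<dots> = length (filter (\<lambda>v. v \<le> m + 1) x)" unfolding s_def by (simp add: filter_sort)
  also have "\<dots> = card (Suc ` {i. i < length x \<and> x ! i \<le> m + 1})"
    by (simp add: length_filter_conv_card card_image)
  also have "Suc ` {i. i < length x \<and> x ! i \<le> m + 1} = {i\<in>{1..length x}. pref x i \<le> int (m + 1)}"
    unfolding pref_def
  proof (intro set_eqI iffI)
    fix i assume "i \<in> Suc ` {i. i < length x \<and> x ! i \<le> m + 1}"
    then show "i \<in> {i \<in> {1..length x}. int (x ! (i - 1)) \<le> int (m + 1)}" by auto
  next
    fix i assume "i \<in> {i \<in> {1..length x}. int (x ! (i - 1)) \<le> int (m + 1)}"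
    then have "i - 1 \<in> {i. i < length x \<and> x ! i \<le> m + 1}" "i = Suc (i - 1)" by auto
    then show "i \<in> Suc ` {i. i < length x \<and> x ! i \<le> m + 1}" by (metis image_eqI)
  qed
  finally show "m + 1 \<le> card {i\<in>{1..length x}. pref x i \<le> int (m + 1)}" .
qed

lemma algA_init_inv:
  assumes pf: "parking_function x"
  obtains y0 where "algA_init x = (y0, {}, {})" "algA_inv (length x) (pref x) y0 {} {}"
proof
  define y0 where "y0 = (\<lambda>k. if k \<in> {1..length x} then pref x k - 1 else -1)"
  show "algA_init x = (y0, {}, {})" unfolding algA_init_def y0_def pref_def by simp
  have nonneg: "0 \<le> y0 k" if "k \<in> {1..length x}" for k
    using parking_function_pos[OF pf that] that unfolding y0_def pref_def by simp
  have "\<forall>v. v \<notin> {1..length x} \<longrightarrow> y0 v = -1" unfolding y0_def by simp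
  then have "edge_inv (length x) y0 {} {}"
    unfolding edge_inv_def settled_before_def using nonneg by fastforce
  moreover have "count_inv (length x) (pref x) y0 {} {}"
    unfolding count_inv_def in_count_def using nonneg by (simp add: y0_def)
  ultimately show "algA_inv (length x) (pref x) y0 {} {}" unfolding algA_inv_def by simp
qed

theorem mainTheorem8:
  fixes x :: "nat list"
  assumes "parking_function x"
  shows "(\<exists>P. algA_output x P) \<and>
         (\<forall>P. algA_output x P \<longrightarrow>
            parking_graph (length x) P \<and>
            (\<forall>i\<in>{1..length x}. indeg P i = x ! (i - 1) - 1))"
proof (intro conjI allI impI)
  obtain y0 where init: "algA_init x = (y0, {}, {})" and inv0: "algA_inv (length x) (pref x) y0 {} {}"
    using algA_init_inv[OF assms] by blast
  note pc = parking_count_pref[OF assms]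
  obtain y' U' D' where "(algA_step (length x))\<^sup>*\<^sup>* (y0, {}, {}) (y', U', D')"
    "\<forall>k\<in>{1..length x}. y' k < 0"
    using algA_terminates[OF inv0 pc] by blast
  then show "\<exists>P. algA_output x P" unfolding algA_output_def init by blast
  fix P assume "algA_output x P"
  then obtain y U D where run: "(algA_step (length x))\<^sup>*\<^sup>* (y0, {}, {}) (y, U, D)"
    and settled: "\<forall>k\<in>{1..length x}. y k < 0" and P: "P = output_graph (length x) U D"
    unfolding algA_output_def output_graph_def init by blast
  have inv: "algA_inv (length x) (pref x) y U D" by (rule algA_inv_reachable[OF run inv0 pc])
  then show "parking_graph (length x) P"
    using output_parking_graph[OF _ settled] unfolding P algA_inv_def by blast
  show "\<forall>i\<in>{1..length x}. indeg P i = x ! (i - 1) - 1"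
  proof
    fix i assume i: "i \<in> {1..length x}"
    have "int (indeg P i) = int (x ! (i - 1)) - 1"
      using output_indeg[OF _ settled i] inv unfolding P algA_inv_def pref_def by blast
    then show "indeg P i = x ! (i - 1) - 1" using parking_function_pos[OF assms i] by linarith
  qed
qed

end
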